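(* Let $q\equiv 3 \pmod 4$ be a prime power and let $P=\{(x,y,z)\in\mathbb{F}_q^3 : z=x^2+y^2\}$. There is an absolute constant $c>0$ such that for any $\lambda,\beta\in\mathbb{F}_q^*$ there exists a set $X\subset P$ with $|X|\ge c\,q^{5/3}$ containing no non-trivial $(\lambda,\beta)$-energy tuple.
   Context: Every point of $P$ is written as $x=(\underline{x},\underline{x}\cdot\underline{x})$ with $\underline{x}\in\mathbb{F}_q^2$, where $u\cdot v=u_1v_1+u_2v_2$. Four points $x,z,y,t\in\mathbb{F}_q^2$ form a rectangle (with vertices in the cyclic order $x,z,y,t$) if $(x-z)\cdot(y-z)=0$, $(z-y)\cdot(t-y)=0$, $(y-t)\cdot(x-t)=0$ and $(t-x)\cdot(z-x)=0$; the length of a side $uv$ is $(u-v)\cdot(u-v)$. A tuple $(a,b,c,d)\in P^4$ is a non-trivial energy tuple if $a+b=c+d$ and $a,b,c,d$ are pairwise distinct; it is a $(\lambda,\beta)$-energy tuple if moreover $\underline{a},\underline{c},\underline{b},\underline{d}$ form a rectangle with side-lengths $\lambda$ and $\beta$. *)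

theory Defs
  imports Complex_Main "HOL-Algebra.Ring"
begin

text \<open>Elements of the finite field F_q are taken from a HOL-Algebra field R whose
carrier consists of natural numbers (every finite field is isomorphic to such one).
This is needed so that the absolute constant c can be quantified before the field.\<close>

type_synonym pt2 = "nat \<times> nat"
type_synonym pt3 = "nat \<times> nat \<times> nat"

definition dot2 :: "nat ring \<Rightarrow> pt2 \<Rightarrow> pt2 \<Rightarrow> nat" where
  "dot2 R u v = (fst u \<otimes>\<^bsub>R\<^esub> fst v) \<oplus>\<^bsub>R\<^esub> (snd u \<otimes>\<^bsub>R\<^esub> snd v)"

definition sub2 :: "nat ring \<Rightarrow> pt2 \<Rightarrow> pt2 \<Rightarrow> pt2" where
  "sub2 R u v = (fst u \<ominus>\<^bsub>R\<^esub> fst v, snd u \<ominus>\<^bsub>R\<^esub> snd v)"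

definition add3 :: "nat ring \<Rightarrow> pt3 \<Rightarrow> pt3 \<Rightarrow> pt3" where
  "add3 R a b = (fst a \<oplus>\<^bsub>R\<^esub> fst b, fst (snd a) \<oplus>\<^bsub>R\<^esub> fst (snd b),
                 snd (snd a) \<oplus>\<^bsub>R\<^esub> snd (snd b))"

definition parab :: "nat ring \<Rightarrow> pt3 set" where
  "parab R = {(x, y, z). x \<in> carrier R \<and> y \<in> carrier R \<and>
                z = (x \<otimes>\<^bsub>R\<^esub> x) \<oplus>\<^bsub>R\<^esub> (y \<otimes>\<^bsub>R\<^esub> y)}"

definition proj2 :: "pt3 \<Rightarrow> pt2" where
  "proj2 a = (fst a, fst (snd a))"

definition rectangle :: "nat ring \<Rightarrow> pt2 \<Rightarrow> pt2 \<Rightarrow> pt2 \<Rightarrow> pt2 \<Rightarrow> bool" where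
  "rectangle R x z y t \<longleftrightarrow>
     dot2 R (sub2 R x z) (sub2 R y z) = \<zero>\<^bsub>R\<^esub> \<and>
     dot2 R (sub2 R z y) (sub2 R t y) = \<zero>\<^bsub>R\<^esub> \<and>
     dot2 R (sub2 R y t) (sub2 R x t) = \<zero>\<^bsub>R\<^esub> \<and>
     dot2 R (sub2 R t x) (sub2 R z x) = \<zero>\<^bsub>R\<^esub>"

definition side_len :: "nat ring \<Rightarrow> pt2 \<Rightarrow> pt2 \<Rightarrow> nat" where
  "side_len R u v = dot2 R (sub2 R u v) (sub2 R u v)"

definition nontrivial_energy_tuple :: "nat ring \<Rightarrow> pt3 \<Rightarrow> pt3 \<Rightarrow> pt3 \<Rightarrow> pt3 \<Rightarrow> bool" where
  "nontrivial_energy_tuple R a b c d \<longleftrightarrow>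
     a \<in> parab R \<and> b \<in> parab R \<and> c \<in> parab R \<and> d \<in> parab R \<and>
     add3 R a b = add3 R c d \<and>
     a \<noteq> b \<and> a \<noteq> c \<and> a \<noteq> d \<and> b \<noteq> c \<and> b \<noteq> d \<and> c \<noteq> d"

definition lb_energy_tuple :: "nat ring \<Rightarrow> nat \<Rightarrow> nat \<Rightarrow> pt3 \<Rightarrow> pt3 \<Rightarrow> pt3 \<Rightarrow> pt3 \<Rightarrow> bool" where
  "lb_energy_tuple R l m a b c d \<longleftrightarrow>
     nontrivial_energy_tuple R a b c d \<and>
     rectangle R (proj2 a) (proj2 c) (proj2 b) (proj2 d) \<and>
     ((side_len R (proj2 a) (proj2 c) = l \<and> side_len R (proj2 c) (proj2 b) = m) \<or>
      (side_len R (proj2 a) (proj2 c) = m \<and> side_len R (proj2 c) (proj2 b) = l))"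

end

theory Submission
  imports Defs
begin

(* Deletion method. An energy tuple (a, b, c, d) is determined by (c, a, b), since d = a + b - c on P.
   Seen from c, the point a lies on one of the two circles of squared radius l, m around c, which
   contain at most 4q points, and b lies on one of these circles and on the line through c
   perpendicular to a - c; as a - c has non-zero squared length, this leaves at most 4 choices.
   So there are at most 16 q^3 energy tuples. Averaging over the k-subsets of P (|P| = q^2) with
   k about q^(5/3)/4 gives one containing at most 16 q^3 (k/q^2)^4 <= k/4 of the sets {a, b, c, d};
   deleting one point from each leaves at least 3k/4 >= 3/32 q^(5/3) points. *)

lemma binomial_mult_power_le:
  fixes k N r :: nat
  assumes "k \<le> N"
  shows "(k choose r) * N ^ r \<le> (N choose r) * k ^ r"
proof (cases "r \<le> k")
  case False
  then show ?thesis by (simp add: binomial_eq_0)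
next
  case True
  have binomial_prod: "real (n choose r) = (\<Prod>i<r. real n - real i) / fact r" for n
    by (simp add: binomial_gbinomial gbinomial_prod_rev atLeast0LessThan)
  have "real (k choose r) * real N ^ r = (\<Prod>i<r. (real k - real i) * real N) / fact r"
    by (simp add: binomial_prod prod.distrib)
  also have "\<dots> \<le> (\<Prod>i<r. (real N - real i) * real k) / fact r"
    using True assms
    by (intro divide_right_mono prod_mono) (auto simp: algebra_simps mult_left_mono)
  also have "\<dots> = real (N choose r) * real k ^ r"
    by (simp add: binomial_prod prod.distrib)
  finally show ?thesis by (simp flip: of_nat_mult of_nat_power)
qed

lemma mult_binomial_le_imp_mult_power_le:
  fixes x y k N r :: nat
  assumes "x * (N choose r) \<le> y * (k choose r)" "k \<le> N" "r \<le> N"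
  shows "x * N ^ r \<le> y * k ^ r"
proof -
  have "x * N ^ r * (N choose r) \<le> y * (k choose r) * N ^ r"
    using mult_le_mono1[OF assms(1), of "N ^ r"] by (simp only: mult_ac)
  also have "\<dots> \<le> y * k ^ r * (N choose r)"
    using mult_le_mono2[OF binomial_mult_power_le[OF assms(2), of r], of y] by (simp only: mult_ac)
  finally show ?thesis
    using assms(3) by simp
qed

lemma card_supersets_mult_binomial:
  assumes "finite V" "e \<subseteq> V"
  shows "card {Y. Y \<subseteq> V \<and> card Y = k \<and> e \<subseteq> Y} * (card V choose card e)
           = (k choose card e) * (card V choose k)"
proof (cases "card e \<le> k \<and> k \<le> card V")
  case False
  have "card e \<le> card Y \<and> card Y \<le> card V" if "Y \<subseteq> V" "e \<subseteq> Y" for Y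
    using that assms by (meson card_mono finite_subset)
  then have "{Y. Y \<subseteq> V \<and> card Y = k \<and> e \<subseteq> Y} = {}"
    using False by fastforce
  then have "card {Y. Y \<subseteq> V \<and> card Y = k \<and> e \<subseteq> Y} = 0"
    by (simp only: card.empty)
  moreover have "k < card e \<or> card V < k"
    using False by linarith
  ultimately show ?thesis
    by (auto simp: binomial_eq_0)
next
  case True
  have fin_e: "finite e"
    using assms finite_subset by blast
  have "bij_betw (\<lambda>Y. Y - e) {Y. Y \<subseteq> V \<and> card Y = k \<and> e \<subseteq> Y}
          {Z. Z \<subseteq> V - e \<and> card Z = k - card e}"
  proof (rule bij_betw_byWitness[where f' = "\<lambda>Z. Z \<union> e"])
    show "(\<lambda>Y. Y - e) ` {Y. Y \<subseteq> V \<and> card Y = k \<and> e \<subseteq> Y} \<subseteq> {Z. Z \<subseteq> V - e \<and> card Z = k - card e}"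
      using fin_e by (auto simp: card_Diff_subset)
    show "(\<lambda>Z. Z \<union> e) ` {Z. Z \<subseteq> V - e \<and> card Z = k - card e} \<subseteq> {Y. Y \<subseteq> V \<and> card Y = k \<and> e \<subseteq> Y}"
    proof clarify
      fix Z assume "Z \<subseteq> V - e" "card Z = k - card e"
      moreover have "finite Z"
        using \<open>Z \<subseteq> V - e\<close> assms(1) finite_subset by blast
      moreover have "Z \<inter> e = {}"
        using \<open>Z \<subseteq> V - e\<close> by blast
      ultimately show "Z \<union> e \<subseteq> V \<and> card (Z \<union> e) = k \<and> e \<subseteq> Z \<union> e"
        using assms(2) fin_e True by (auto simp: card_Un_disjoint)
    qed
  qed auto
  then have "card {Y. Y \<subseteq> V \<and> card Y = k \<and> e \<subseteq> Y} = (card V - card e) choose (k - card e)"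
    using assms by (simp add: bij_betw_same_card n_subsets card_Diff_subset fin_e)
  then show ?thesis
    using True choose_mult[of "card e" k "card V"] by (simp add: mult.commute)
qed

lemma exists_subset_few_edges:
  assumes "finite V" and edges: "\<And>e. e \<in> E \<Longrightarrow> e \<subseteq> V \<and> card e = r" and "k \<le> card V"
  shows "\<exists>Y\<subseteq>V. card Y = k \<and> card {e \<in> E. e \<subseteq> Y} * (card V choose r) \<le> card E * (k choose r)"
proof -
  define Fam where "Fam = {Y. Y \<subseteq> V \<and> card Y = k}"
  have "finite Fam"
    using assms(1) by (simp add: Fam_def)
  have card_Fam: "card Fam = card V choose k"
    using assms(1) by (simp add: Fam_def n_subsets)
  have "finite E"
    using edges assms(1) by (meson Pow_iff finite_Pow_iff finite_subset subsetI)
  have supersets: "card {Y. Y \<subseteq> V \<and> card Y = k \<and> e \<subseteq> Y} * (card V choose r) = (k choose r) * card Fam"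
    if "e \<in> E" for e
    using card_supersets_mult_binomial[OF assms(1), of e k] edges[OF that] card_Fam by simp
  have "(\<Sum>Y\<in>Fam. card {e \<in> E. e \<subseteq> Y}) = (\<Sum>Y\<in>Fam. \<Sum>e\<in>E. if e \<subseteq> Y then 1 else 0)"
    using \<open>finite E\<close> by (simp add: sum.If_cases Int_def)
  also have "\<dots> = (\<Sum>e\<in>E. card {Y. Y \<subseteq> V \<and> card Y = k \<and> e \<subseteq> Y})"
    using \<open>finite Fam\<close> by (subst sum.swap) (simp add: sum.If_cases Int_def Fam_def conj_assoc)
  finally have "(\<Sum>Y\<in>Fam. card {e \<in> E. e \<subseteq> Y} * (card V choose r))
                  = (\<Sum>e\<in>E. card {Y. Y \<subseteq> V \<and> card Y = k \<and> e \<subseteq> Y} * (card V choose r))"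
    by (simp flip: sum_distrib_right)
  also have "\<dots> = (\<Sum>Y\<in>Fam. card E * (k choose r))"
    using supersets by (simp add: mult_ac)
  finally have total: "(\<Sum>Y\<in>Fam. card {e \<in> E. e \<subseteq> Y} * (card V choose r)) = (\<Sum>Y\<in>Fam. card E * (k choose r))" .
  show ?thesis
  proof (rule ccontr)
    assume "\<not> ?thesis"
    then have "\<forall>Y\<in>Fam. card E * (k choose r) < card {e \<in> E. e \<subseteq> Y} * (card V choose r)"
      by (auto simp: Fam_def not_le)
    moreover have "Fam \<noteq> {}"
      using card_Fam assms(3) by auto
    ultimately have "(\<Sum>Y\<in>Fam. card E * (k choose r)) < (\<Sum>Y\<in>Fam. card {e \<in> E. e \<subseteq> Y} * (card V choose r))"
      using \<open>finite Fam\<close> by (intro sum_strict_mono) auto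
    with total show False
      by simp
  qed
qed

lemma exists_subset_avoiding_edges:
  assumes "finite Y" "finite E" "{} \<notin> E"
  shows "\<exists>X\<subseteq>Y. card Y \<le> card X + card {e \<in> E. e \<subseteq> Y} \<and> (\<forall>e\<in>E. \<not> e \<subseteq> X)"
proof -
  define hit where "hit = (\<lambda>e. SOME x. x \<in> e) ` {e \<in> E. e \<subseteq> Y}"
  have hit_in: "(SOME x. x \<in> e) \<in> e" if "e \<in> E" for e
    using that assms(3) by (metis equals0I someI_ex)
  have "card Y \<le> card ((Y - hit) \<union> hit)"
    using assms(1,2) by (intro card_mono) (auto simp: hit_def)
  also have "\<dots> \<le> card (Y - hit) + card hit"
    by (rule card_Un_le)
  also have "card hit \<le> card {e \<in> E. e \<subseteq> Y}"
    unfolding hit_def using assms(2) by (intro card_image_le) auto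
  finally have "card Y \<le> card (Y - hit) + card {e \<in> E. e \<subseteq> Y}"
    by simp
  moreover have "\<not> e \<subseteq> Y - hit" if "e \<in> E" for e
  proof
    assume "e \<subseteq> Y - hit"
    then have "(SOME x. x \<in> e) \<in> hit"
      using that by (auto simp: hit_def)
    with \<open>e \<subseteq> Y - hit\<close> hit_in[OF that] show False
      by blast
  qed
  ultimately show ?thesis
    by blast
qed

lemma exists_independent_subset:
  assumes "finite V" and edges: "\<And>e. e \<in> E \<Longrightarrow> e \<subseteq> V \<and> card e = r" and "0 < r" "k \<le> card V"
  shows "\<exists>X\<subseteq>V. real k - real (card E) * (real k / real (card V)) ^ r \<le> real (card X)
                \<and> (\<forall>e\<in>E. \<not> e \<subseteq> X)"
proof (cases "k = 0")
  case True
  then show ?thesis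
    using assms(3) edges[of "{}"] by (intro exI[of _ "{}"]) auto
next
  case False
  with assms(4) have "0 < card V"
    by linarith
  obtain Y where "Y \<subseteq> V" "card Y = k"
    and few: "card {e \<in> E. e \<subseteq> Y} * (card V choose r) \<le> card E * (k choose r)"
    using exists_subset_few_edges[OF assms(1) edges assms(4)] by blast
  have "finite Y"
    using \<open>Y \<subseteq> V\<close> assms(1) finite_subset by blast
  moreover have "finite E"
    using edges assms(1) by (meson Pow_iff finite_Pow_iff finite_subset subsetI)
  moreover have "{} \<notin> E"
    using edges assms(3) by fastforce
  ultimately obtain X where "X \<subseteq> Y" "card Y \<le> card X + card {e \<in> E. e \<subseteq> Y}" "\<forall>e\<in>E. \<not> e \<subseteq> X"
    by (metis exists_subset_avoiding_edges)
  have "card {e \<in> E. e \<subseteq> Y} * card V ^ r \<le> card E * k ^ r"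
  proof (cases "E = {}")
    case False
    then obtain e where "e \<in> E"
      by blast
    then have "r \<le> card V"
      using edges assms(1) card_mono by metis
    with few assms(4) show ?thesis
      by (rule mult_binomial_le_imp_mult_power_le)
  qed simp
  then have "real (card {e \<in> E. e \<subseteq> Y}) * real (card V) ^ r \<le> real (card E) * real k ^ r"
    by (metis of_nat_le_iff of_nat_mult of_nat_power)
  then have "real (card {e \<in> E. e \<subseteq> Y}) \<le> real (card E) * (real k / real (card V)) ^ r"
    using \<open>0 < card V\<close> by (simp add: power_divide pos_le_divide_eq)
  then show ?thesis
    using \<open>X \<subseteq> Y\<close> \<open>Y \<subseteq> V\<close> \<open>card Y = k\<close> \<open>card Y \<le> card X + card {e \<in> E. e \<subseteq> Y}\<close> \<open>\<forall>e\<in>E. \<not> e \<subseteq> X\<close>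
    by (intro exI[of _ X]) auto
qed

lemma deletion_parameter_bounds:
  fixes q :: nat
  assumes "3 \<le> q"
  defines "k \<equiv> nat \<lfloor>real q powr (5/3) / 4\<rfloor>"
  shows "k \<le> q ^ 2"
    and "3/32 * real q powr (5/3) \<le> real k - 16 * real q ^ 3 * (real k / real q ^ 2) ^ 4"
proof -
  define y where "y = real q powr (5/3)"
  have "0 < real q"
    using assms(1) by simp
  have "y ^ 3 = real q powr (real 3 * (5/3))"
    unfolding y_def using \<open>0 < real q\<close> by (intro powr_power) simp
  also have "\<dots> = real q ^ 5"
    using \<open>0 < real q\<close> by (simp add: powr_realpow)
  finally have y_cube: "y ^ 3 = real q ^ 5" .
  have "4 \<le> y"
  proof (rule ccontr)
    assume "\<not> 4 \<le> y"
    then have "y ^ 3 < 4 ^ 3"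
      using \<open>0 < real q\<close> by (intro power_strict_mono) (auto simp: y_def)
    moreover have "(3::real) ^ 5 \<le> real q ^ 5"
      using assms(1) by (intro power_mono) auto
    ultimately show False
      using y_cube by simp
  qed
  have k: "real k = of_int \<lfloor>y / 4\<rfloor>"
    using \<open>4 \<le> y\<close> by (simp add: k_def y_def)
  moreover have "1 \<le> \<lfloor>y / 4\<rfloor>"
    using \<open>4 \<le> y\<close> by simp
  ultimately have "real k \<le> y / 4" "y / 8 \<le> real k"
    using floor_correct[of "y / 4"] by linarith+
  have "y \<le> real q ^ 2"
    using assms(1) by (auto simp: y_def intro: order.trans[OF powr_mono powr_realpow[THEN eq_refl]])
  then have "real k \<le> real q ^ 2"
    using \<open>real k \<le> y / 4\<close> \<open>4 \<le> y\<close> by linarith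
  then show "k \<le> q ^ 2"
    by (metis of_nat_le_iff of_nat_power)
  have "16 * real q ^ 3 * (real k / real q ^ 2) ^ 4 = 16 * real k * real k ^ 3 / y ^ 3"
    using \<open>0 < real q\<close> unfolding y_cube by (simp add: power_divide field_simps eval_nat_numeral)
  also have "\<dots> \<le> 16 * real k * (y / 4) ^ 3 / y ^ 3"
    using \<open>real k \<le> y / 4\<close> \<open>4 \<le> y\<close> by (intro divide_right_mono mult_left_mono power_mono) auto
  also have "\<dots> = real k / 4"
    using \<open>4 \<le> y\<close> by (simp add: power_divide)
  finally show "3/32 * real q powr (5/3) \<le> real k - 16 * real q ^ 3 * (real k / real q ^ 2) ^ 4"
    using \<open>y / 8 \<le> real k\<close> by (simp add: y_def)
qed

context domain
begin

lemma square_roots_subset: "\<exists>y\<in>carrier R. {x \<in> carrier R. x \<otimes> x = r} \<subseteq> {y, \<ominus> y}"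
proof (cases "\<exists>y\<in>carrier R. y \<otimes> y = r")
  case True
  then obtain y where y: "y \<in> carrier R" "r = y \<otimes> y"
    by blast
  have "x = y \<or> x = \<ominus> y" if x: "x \<in> carrier R" "x \<otimes> x = y \<otimes> y" for x
  proof -
    have "(x \<ominus> y) \<otimes> (x \<oplus> y) = \<zero>"
      using x y by algebra
    then have "x \<ominus> y = \<zero> \<or> x \<oplus> y = \<zero>"
      using x y by (simp add: integral_iff)
    moreover have "x = (x \<ominus> y) \<oplus> y" "x = (x \<oplus> y) \<ominus> y"
      using x y by algebra+
    ultimately show ?thesis
      using y by (auto simp: a_minus_def)
  qed
  with y show ?thesis
    by blast
next
  case False
  then show ?thesis
    by blast
qed

lemma finite_square_roots: "finite {x \<in> carrier R. x \<otimes> x = r}"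
  using square_roots_subset by (meson finite.emptyI finite.insertI finite_subset)

lemma card_square_roots_le_2: "card {x \<in> carrier R. x \<otimes> x = r} \<le> 2"
proof -
  obtain y where "{x \<in> carrier R. x \<otimes> x = r} \<subseteq> {y, \<ominus> y}"
    using square_roots_subset by blast
  then have "card {x \<in> carrier R. x \<otimes> x = r} \<le> card {y, \<ominus> y}"
    by (intro card_mono) auto
  also have "\<dots> \<le> 2"
    by (simp add: card_insert_le_m1)
  finally show ?thesis .
qed

end

context cring
begin

lemma orthogonal_cross_identities:
  assumes R: "u1 \<in> carrier R" "u2 \<in> carrier R" "w1 \<in> carrier R" "w2 \<in> carrier R"
    and orth: "u1 \<otimes> w1 \<oplus> u2 \<otimes> w2 = \<zero>"
  defines "z \<equiv> w2 \<otimes> u1 \<ominus> w1 \<otimes> u2"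
  shows "z \<otimes> z = (u1 \<otimes> u1 \<oplus> u2 \<otimes> u2) \<otimes> (w1 \<otimes> w1 \<oplus> w2 \<otimes> w2)"
    and "w1 \<otimes> (u1 \<otimes> u1 \<oplus> u2 \<otimes> u2) = \<ominus> (z \<otimes> u2)"
    and "w2 \<otimes> (u1 \<otimes> u1 \<oplus> u2 \<otimes> u2) = z \<otimes> u1"
proof -
  have z: "z \<in> carrier R"
    unfolding z_def using R by simp
  let ?d = "u1 \<otimes> w1 \<oplus> u2 \<otimes> w2"
  have "z \<otimes> z \<oplus> ?d \<otimes> ?d = (u1 \<otimes> u1 \<oplus> u2 \<otimes> u2) \<otimes> (w1 \<otimes> w1 \<oplus> w2 \<otimes> w2)"
    "w1 \<otimes> (u1 \<otimes> u1 \<oplus> u2 \<otimes> u2) = ?d \<otimes> u1 \<ominus> z \<otimes> u2"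
    "w2 \<otimes> (u1 \<otimes> u1 \<oplus> u2 \<otimes> u2) = ?d \<otimes> u2 \<oplus> z \<otimes> u1"
    unfolding z_def using R by algebra+
  then show "z \<otimes> z = (u1 \<otimes> u1 \<oplus> u2 \<otimes> u2) \<otimes> (w1 \<otimes> w1 \<oplus> w2 \<otimes> w2)"
    and "w1 \<otimes> (u1 \<otimes> u1 \<oplus> u2 \<otimes> u2) = \<ominus> (z \<otimes> u2)"
    and "w2 \<otimes> (u1 \<otimes> u1 \<oplus> u2 \<otimes> u2) = z \<otimes> u1"
    using orth R z by (simp_all add: minus_eq)
qed

end

definition circle :: "nat ring \<Rightarrow> pt2 \<Rightarrow> nat \<Rightarrow> pt2 set" where
  "circle R c k = {v \<in> carrier R \<times> carrier R. side_len R v c = k}"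

definition perp_line :: "nat ring \<Rightarrow> pt2 \<Rightarrow> pt2 \<Rightarrow> pt2 set" where
  "perp_line R c u = {v \<in> carrier R \<times> carrier R. dot2 R u (sub2 R v c) = \<zero>\<^bsub>R\<^esub>}"

definition right_angles :: "nat ring \<Rightarrow> nat \<Rightarrow> nat \<Rightarrow> (pt2 \<times> pt2 \<times> pt2) set" where
  "right_angles R l m = (SIGMA c:carrier R \<times> carrier R. SIGMA a:circle R c l \<union> circle R c m.
      perp_line R c (sub2 R a c) \<inter> (circle R c l \<union> circle R c m))"

definition lb_energy_tuples :: "nat ring \<Rightarrow> nat \<Rightarrow> nat \<Rightarrow> (pt3 \<times> pt3 \<times> pt3 \<times> pt3) set" where
  "lb_energy_tuples R l m = {(a, b, c, d). lb_energy_tuple R l m a b c d}"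

locale nat_domain = domain R for R :: "nat ring" (structure)
begin

lemma side_len_commute:
  assumes "u \<in> carrier R \<times> carrier R" "v \<in> carrier R \<times> carrier R"
  shows "side_len R u v = side_len R v u"
  using assms unfolding side_len_def dot2_def sub2_def by (cases u, cases v) (simp, algebra)

lemma card_circle_le:
  assumes "finite (carrier R)" "c \<in> carrier R \<times> carrier R"
  shows "card (circle R c k) \<le> 2 * card (carrier R)"
proof -
  obtain c1 c2 where c: "c = (c1, c2)" "c1 \<in> carrier R" "c2 \<in> carrier R"
    using assms(2) by auto
  define column where "column x = {y \<in> carrier R. side_len R (x, y) c = k}" for x
  have "card (column x) \<le> 2" if x: "x \<in> carrier R" for x
  proof -
    let ?r = "k \<ominus> (x \<ominus> c1) \<otimes> (x \<ominus> c1)"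
    have "inj_on (\<lambda>y. y \<ominus> c2) (column x)"
      using c by (auto simp: inj_on_def column_def a_minus_def)
    moreover have "(\<lambda>y. y \<ominus> c2) ` column x \<subseteq> {s \<in> carrier R. s \<otimes> s = ?r}"
    proof clarify
      fix y assume "y \<in> column x"
      then have y: "y \<in> carrier R" and "(x \<ominus> c1) \<otimes> (x \<ominus> c1) \<oplus> (y \<ominus> c2) \<otimes> (y \<ominus> c2) = k"
        by (simp_all add: column_def side_len_def dot2_def sub2_def c)
      moreover have "(y \<ominus> c2) \<otimes> (y \<ominus> c2)
          = ((x \<ominus> c1) \<otimes> (x \<ominus> c1) \<oplus> (y \<ominus> c2) \<otimes> (y \<ominus> c2)) \<ominus> (x \<ominus> c1) \<otimes> (x \<ominus> c1)"
        using x y c by algebra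
      ultimately show "y \<ominus> c2 \<in> carrier R \<and> (y \<ominus> c2) \<otimes> (y \<ominus> c2) = ?r"
        using c by simp
    qed
    ultimately have "card (column x) \<le> card {s \<in> carrier R. s \<otimes> s = ?r}"
      by (rule card_inj_on_le[OF _ _ finite_square_roots])
    then show ?thesis
      using card_square_roots_le_2 le_trans by blast
  qed
  moreover have "circle R c k = (SIGMA x:carrier R. column x)"
    by (auto simp: circle_def column_def)
  ultimately show ?thesis
    using assms(1) sum_bounded_above[of "carrier R" "\<lambda>x. card (column x)" 2]
    by (simp add: column_def mult.commute)
qed

(* The cross product z of v - c with u determines v, as |u|^2 (v - c) = z (-u2, u1): only |u|^2 <> 0
   is needed, not the absence of isotropic vectors. *)
lemma card_perp_line_Int_circle_le:
  assumes u: "u \<in> carrier R \<times> carrier R" "dot2 R u u \<noteq> \<zero>" and c: "c \<in> carrier R \<times> carrier R"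
  shows "card (perp_line R c u \<inter> circle R c k) \<le> 2"
proof -
  obtain u1 u2 c1 c2 where uc: "u = (u1, u2)" "c = (c1, c2)"
    and carr: "u1 \<in> carrier R" "u2 \<in> carrier R" "c1 \<in> carrier R" "c2 \<in> carrier R"
    using u(1) c by auto
  let ?L = "u1 \<otimes> u1 \<oplus> u2 \<otimes> u2"
  have "?L \<noteq> \<zero>" "?L \<in> carrier R"
    using u(2) carr by (simp_all add: uc dot2_def)
  define cross where "cross = (\<lambda>(x, y). (y \<ominus> c2) \<otimes> u1 \<ominus> (x \<ominus> c1) \<otimes> u2)"
  have key: "cross (x, y) \<otimes> cross (x, y) = ?L \<otimes> k
      \<and> (x \<ominus> c1) \<otimes> ?L = \<ominus> (cross (x, y) \<otimes> u2) \<and> (y \<ominus> c2) \<otimes> ?L = cross (x, y) \<otimes> u1"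
    if "(x, y) \<in> perp_line R c u \<inter> circle R c k" for x y
  proof -
    have xy: "x \<in> carrier R" "y \<in> carrier R"
      and orth: "u1 \<otimes> (x \<ominus> c1) \<oplus> u2 \<otimes> (y \<ominus> c2) = \<zero>"
      and len: "(x \<ominus> c1) \<otimes> (x \<ominus> c1) \<oplus> (y \<ominus> c2) \<otimes> (y \<ominus> c2) = k"
      using that by (simp_all add: perp_line_def circle_def side_len_def dot2_def sub2_def uc)
    show ?thesis
      using orthogonal_cross_identities[OF carr(1,2) _ _ orth] xy carr len
      by (simp add: cross_def)
  qed
  have "inj_on cross (perp_line R c u \<inter> circle R c k)"
  proof (rule inj_onI)
    fix v v'
    assume v: "v \<in> perp_line R c u \<inter> circle R c k" and v': "v' \<in> perp_line R c u \<inter> circle R c k"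
      and "cross v = cross v'"
    obtain x y x' y' where xy: "v = (x, y)" "v' = (x', y')"
      by fastforce
    have "(x \<ominus> c1) \<otimes> ?L = (x' \<ominus> c1) \<otimes> ?L" "(y \<ominus> c2) \<otimes> ?L = (y' \<ominus> c2) \<otimes> ?L"
      using key v v' \<open>cross v = cross v'\<close> by (simp_all add: xy)
    moreover have "x \<in> carrier R" "y \<in> carrier R" "x' \<in> carrier R" "y' \<in> carrier R"
      using v v' by (auto simp: circle_def xy)
    ultimately show "v = v'"
      using \<open>?L \<noteq> \<zero>\<close> \<open>?L \<in> carrier R\<close> carr by (simp add: xy m_rcancel a_minus_def)
  qed
  moreover have "cross ` (perp_line R c u \<inter> circle R c k) \<subseteq> {z \<in> carrier R. z \<otimes> z = ?L \<otimes> k}"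
    using key carr by (auto simp: cross_def circle_def)
  ultimately have "card (perp_line R c u \<inter> circle R c k) \<le> card {z \<in> carrier R. z \<otimes> z = ?L \<otimes> k}"
    by (rule card_inj_on_le[OF _ _ finite_square_roots])
  then show ?thesis
    using card_square_roots_le_2 le_trans by blast
qed

lemma parab_eq_graph: "parab R = (\<lambda>(x, y). (x, y, x \<otimes> x \<oplus> y \<otimes> y)) ` (carrier R \<times> carrier R)"
  by (auto simp: parab_def)

lemma card_parab:
  assumes "finite (carrier R)"
  shows "card (parab R) = card (carrier R) ^ 2"
proof -
  have "inj_on (\<lambda>(x, y). (x, y, x \<otimes> x \<oplus> y \<otimes> y)) (carrier R \<times> carrier R)"
    by (auto simp: inj_on_def)
  then show ?thesis
    by (simp add: parab_eq_graph card_image card_cartesian_product power2_eq_square)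
qed

lemma finite_parab: "finite (carrier R) \<Longrightarrow> finite (parab R)"
  by (simp add: parab_eq_graph)

lemma proj2_parab: "a \<in> parab R \<Longrightarrow> proj2 a \<in> carrier R \<times> carrier R"
  by (auto simp: parab_def proj2_def)

lemma inj_on_proj2_parab: "inj_on proj2 (parab R)"
  by (auto simp: inj_on_def parab_def proj2_def)

lemma parab_add3_cancel_left:
  assumes "c \<in> parab R" "d \<in> parab R" "d' \<in> parab R" "add3 R c d = add3 R c d'"
  shows "d = d'"
proof -
  have "proj2 d = proj2 d'"
    using assms by (auto simp: parab_def add3_def proj2_def) (metis add.m_comm add.right_cancel)+
  then show ?thesis
    using assms(2,3) inj_on_proj2_parab by (auto dest: inj_onD)
qed

lemma card_right_angle_fibre_le:
  assumes lm: "l \<in> carrier R - {\<zero>}" "m \<in> carrier R - {\<zero>}"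
    and c: "c \<in> carrier R \<times> carrier R" and a: "a \<in> circle R c l \<union> circle R c m"
  shows "card (perp_line R c (sub2 R a c) \<inter> (circle R c l \<union> circle R c m)) \<le> 4"
proof -
  have "a \<in> carrier R \<times> carrier R" "side_len R a c \<in> {l, m}"
    using a by (auto simp: circle_def)
  then have "sub2 R a c \<in> carrier R \<times> carrier R" "dot2 R (sub2 R a c) (sub2 R a c) \<noteq> \<zero>"
    using c lm by (auto simp: sub2_def side_len_def)
  then have two: "card (perp_line R c (sub2 R a c) \<inter> circle R c k) \<le> 2" for k
    using c by (rule card_perp_line_Int_circle_le)
  have "card (perp_line R c (sub2 R a c) \<inter> (circle R c l \<union> circle R c m))
      \<le> card (perp_line R c (sub2 R a c) \<inter> circle R c l) + card (perp_line R c (sub2 R a c) \<inter> circle R c m)"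
    unfolding Int_Un_distrib by (rule card_Un_le)
  with two[of l] two[of m] show ?thesis
    by linarith
qed

lemma card_right_angles_le:
  assumes fin: "finite (carrier R)" and lm: "l \<in> carrier R - {\<zero>}" "m \<in> carrier R - {\<zero>}"
  shows "card (right_angles R l m) \<le> 16 * card (carrier R) ^ 3"
proof -
  let ?q = "card (carrier R)"
  define circ where "circ c = circle R c l \<union> circle R c m" for c
  have fin_circ: "finite (circ c)" for c
    using fin finite_subset[of "circ c" "carrier R \<times> carrier R"] by (auto simp: circ_def circle_def)
  have fibres: "(\<Sum>a\<in>circ c. card (perp_line R c (sub2 R a c) \<inter> circ c)) \<le> 4 * ?q * 4"
    if "c \<in> carrier R \<times> carrier R" for c
  proof -
    have "(\<Sum>a\<in>circ c. card (perp_line R c (sub2 R a c) \<inter> circ c)) \<le> (\<Sum>a\<in>circ c. 4)"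
      using card_right_angle_fibre_le[OF lm that] by (intro sum_mono) (simp add: circ_def)
    also have "\<dots> = card (circ c) * 4"
      by simp
    also have "\<dots> \<le> 4 * ?q * 4"
      unfolding circ_def
      using card_Un_le[of "circle R c l" "circle R c m"] card_circle_le[OF fin that, of l] card_circle_le[OF fin that, of m]
      by linarith
    finally show ?thesis .
  qed
  have "card (right_angles R l m)
      = (\<Sum>c\<in>carrier R \<times> carrier R. card (SIGMA a:circ c. perp_line R c (sub2 R a c) \<inter> circ c))"
    unfolding right_angles_def circ_def[symmetric] using fin fin_circ
    by (intro card_SigmaI) (auto intro: finite_SigmaI)
  also have "\<dots> = (\<Sum>c\<in>carrier R \<times> carrier R. \<Sum>a\<in>circ c. card (perp_line R c (sub2 R a c) \<inter> circ c))"
    using fin_circ by (intro sum.cong refl card_SigmaI) auto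
  also have "\<dots> \<le> (\<Sum>c\<in>carrier R \<times> carrier R. 4 * ?q * 4)"
    using fibres by (rule sum_mono)
  also have "\<dots> = 16 * ?q ^ 3"
    by (simp add: card_cartesian_product power3_eq_cube)
  finally show ?thesis .
qed

lemma lb_energy_tuple_right_angle:
  assumes "lb_energy_tuple R l m a b c d"
  shows "(proj2 c, proj2 a, proj2 b) \<in> right_angles R l m"
proof -
  have "a \<in> parab R" "b \<in> parab R" "c \<in> parab R"
    and "rectangle R (proj2 a) (proj2 c) (proj2 b) (proj2 d)"
    and "side_len R (proj2 a) (proj2 c) \<in> {l, m}" "side_len R (proj2 c) (proj2 b) \<in> {l, m}"
    using assms unfolding lb_energy_tuple_def nontrivial_energy_tuple_def by auto
  then have "proj2 a \<in> carrier R \<times> carrier R" "proj2 b \<in> carrier R \<times> carrier R" "proj2 c \<in> carrier R \<times> carrier R"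
    and "dot2 R (sub2 R (proj2 a) (proj2 c)) (sub2 R (proj2 b) (proj2 c)) = \<zero>"
    and "side_len R (proj2 a) (proj2 c) \<in> {l, m}" "side_len R (proj2 b) (proj2 c) \<in> {l, m}"
    by (simp_all add: rectangle_def proj2_parab side_len_commute[of "proj2 b" "proj2 c"])
  then show ?thesis
    by (simp add: right_angles_def circle_def perp_line_def)
qed

lemma inj_on_lb_energy_tuples:
  "inj_on (\<lambda>(a, b, c, d). (proj2 c, proj2 a, proj2 b)) (lb_energy_tuples R l m)"
proof (rule inj_onI)
  fix t t'
  assume t: "t \<in> lb_energy_tuples R l m" and t': "t' \<in> lb_energy_tuples R l m"
    and g: "(\<lambda>(a, b, c, d). (proj2 c, proj2 a, proj2 b)) t = (\<lambda>(a, b, c, d). (proj2 c, proj2 a, proj2 b)) t'"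
  obtain a b c d where t_eq: "t = (a, b, c, d)"
    by (cases t rule: prod_cases4)
  obtain a' b' c' d' where t'_eq: "t' = (a', b', c', d')"
    by (cases t' rule: prod_cases4)
  have "nontrivial_energy_tuple R a b c d" "nontrivial_energy_tuple R a' b' c' d'"
    using t t' by (simp_all add: t_eq t'_eq lb_energy_tuples_def lb_energy_tuple_def)
  then have P: "a \<in> parab R" "b \<in> parab R" "c \<in> parab R" "d \<in> parab R"
      "a' \<in> parab R" "b' \<in> parab R" "c' \<in> parab R" "d' \<in> parab R"
    and sums: "add3 R a b = add3 R c d" "add3 R a' b' = add3 R c' d'"
    by (simp_all add: nontrivial_energy_tuple_def)
  have "a = a'" "b = b'" "c = c'"
    using g P inj_on_proj2_parab by (auto simp: t_eq t'_eq dest: inj_onD)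
  then have "d = d'"
    using parab_add3_cancel_left[of c d d'] P sums by simp
  with \<open>a = a'\<close> \<open>b = b'\<close> \<open>c = c'\<close> show "t = t'"
    by (simp add: t_eq t'_eq)
qed

lemma lb_energy_quadruples:
  assumes fin: "finite (carrier R)" and lm: "l \<in> carrier R - {\<zero>}" "m \<in> carrier R - {\<zero>}"
  defines "E \<equiv> (\<lambda>(a, b, c, d). {a, b, c, d}) ` lb_energy_tuples R l m"
  shows "\<And>e. e \<in> E \<Longrightarrow> e \<subseteq> parab R \<and> card e = 4"
    and "card E \<le> 16 * card (carrier R) ^ 3"
proof -
  fix e assume "e \<in> E"
  then obtain a b c d where "e = {a, b, c, d}" "lb_energy_tuple R l m a b c d"
    by (auto simp: E_def lb_energy_tuples_def)
  then show "e \<subseteq> parab R \<and> card e = 4"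
    by (auto simp: lb_energy_tuple_def nontrivial_energy_tuple_def)
next
  have "right_angles R l m \<subseteq> (carrier R \<times> carrier R) \<times> (carrier R \<times> carrier R) \<times> (carrier R \<times> carrier R)"
    by (auto simp: right_angles_def circle_def)
  then have "finite (right_angles R l m)"
    by (rule finite_subset) (simp add: fin)
  moreover have "(\<lambda>(a, b, c, d). (proj2 c, proj2 a, proj2 b)) ` lb_energy_tuples R l m \<subseteq> right_angles R l m"
    using lb_energy_tuple_right_angle by (auto simp: lb_energy_tuples_def)
  ultimately have "card (lb_energy_tuples R l m) \<le> card (right_angles R l m)"
    using inj_on_lb_energy_tuples by (intro card_inj_on_le)
  moreover have "lb_energy_tuples R l m \<subseteq> parab R \<times> parab R \<times> parab R \<times> parab R"
    by (auto simp: lb_energy_tuples_def lb_energy_tuple_def nontrivial_energy_tuple_def)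
  then have "card E \<le> card (lb_energy_tuples R l m)"
    unfolding E_def using finite_parab[OF fin] by (intro card_image_le) (auto intro: finite_subset)
  ultimately show "card E \<le> 16 * card (carrier R) ^ 3"
    using card_right_angles_le[OF fin lm] by linarith
qed

lemma exists_large_lb_energy_free_subset:
  assumes fin: "finite (carrier R)" and "3 \<le> card (carrier R)"
    and lm: "l \<in> carrier R - {\<zero>}" "m \<in> carrier R - {\<zero>}"
  shows "\<exists>X. X \<subseteq> parab R \<and> 3/32 * real (card (carrier R)) powr (5/3) \<le> real (card X)
           \<and> \<not> (\<exists>a\<in>X. \<exists>b\<in>X. \<exists>c\<in>X. \<exists>d\<in>X. lb_energy_tuple R l m a b c d)"
proof -
  let ?q = "card (carrier R)"
  define k where "k = nat \<lfloor>real ?q powr (5/3) / 4\<rfloor>"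
  define E where "E = (\<lambda>(a, b, c, d). {a, b, c, d}) ` lb_energy_tuples R l m"
  have "k \<le> card (parab R)"
    unfolding k_def card_parab[OF fin] by (rule deletion_parameter_bounds(1)[OF \<open>3 \<le> ?q\<close>])
  with exists_independent_subset[of "parab R" E 4 k] finite_parab[OF fin] lb_energy_quadruples(1)[OF fin lm]
  obtain X where "X \<subseteq> parab R"
    and large: "real k - real (card E) * (real k / real (card (parab R))) ^ 4 \<le> real (card X)"
    and indep: "\<forall>e\<in>E. \<not> e \<subseteq> X"
    by (auto simp: E_def)
  have "real (card E) \<le> 16 * real ?q ^ 3"
    using lb_energy_quadruples(2)[OF fin lm] of_nat_le_iff[of "card E" "16 * ?q ^ 3"] by (simp add: E_def)
  have "3/32 * real ?q powr (5/3) \<le> real k - 16 * real ?q ^ 3 * (real k / real ?q ^ 2) ^ 4"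
    unfolding k_def by (rule deletion_parameter_bounds(2)[OF \<open>3 \<le> ?q\<close>])
  also have "\<dots> \<le> real k - real (card E) * (real k / real (card (parab R))) ^ 4"
    unfolding card_parab[OF fin] of_nat_power using \<open>real (card E) \<le> 16 * real ?q ^ 3\<close>
    by (intro diff_left_mono mult_right_mono) simp_all
  also note large
  finally have "3/32 * real ?q powr (5/3) \<le> real (card X)" .
  show ?thesis
  proof (intro exI[of _ X] conjI notI)
    assume "\<exists>a\<in>X. \<exists>b\<in>X. \<exists>c\<in>X. \<exists>d\<in>X. lb_energy_tuple R l m a b c d"
    then obtain a b c d where "{a, b, c, d} \<subseteq> X" "lb_energy_tuple R l m a b c d"
      by blast
    moreover from this have "{a, b, c, d} \<in> E"
      unfolding E_def lb_energy_tuples_def by (intro image_eqI[where x = "(a, b, c, d)"]) auto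
    ultimately show False
      using indep by blast
  qed fact+
qed

end

theorem proposition1p5:
  shows "\<exists>c::real. c > 0 \<and>
    (\<forall>R :: nat ring. field R \<longrightarrow> finite (carrier R) \<longrightarrow> card (carrier R) mod 4 = 3 \<longrightarrow>
      (\<forall>l \<in> carrier R - {\<zero>\<^bsub>R\<^esub>}. \<forall>m \<in> carrier R - {\<zero>\<^bsub>R\<^esub>}.
        \<exists>X. X \<subseteq> parab R \<and>
            real (card X) \<ge> c * real (card (carrier R)) powr (5/3) \<and>
            \<not> (\<exists>a\<in>X. \<exists>b\<in>X. \<exists>c'\<in>X. \<exists>d\<in>X. lb_energy_tuple R l m a b c' d)))"
proof (intro exI[of _ "3/32"] conjI allI impI ballI)
  fix R :: "nat ring" and l m
  assume "field R" and fin: "finite (carrier R)" and "card (carrier R) mod 4 = 3"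
    and lm: "l \<in> carrier R - {\<zero>\<^bsub>R\<^esub>}" "m \<in> carrier R - {\<zero>\<^bsub>R\<^esub>}"
  interpret nat_domain R
    using \<open>field R\<close> by (simp add: nat_domain_def field_def)
  \<comment> \<open>The congruence condition is only needed to ensure q \<ge> 3.\<close>
  have "3 \<le> card (carrier R)"
    using \<open>card (carrier R) mod 4 = 3\<close> by (metis mod_less_eq_dividend)
  then show "\<exists>X. X \<subseteq> parab R \<and> 3/32 * real (card (carrier R)) powr (5/3) \<le> real (card X)
      \<and> \<not> (\<exists>a\<in>X. \<exists>b\<in>X. \<exists>c'\<in>X. \<exists>d\<in>X. lb_energy_tuple R l m a b c' d)"
    by (rule exists_large_lb_energy_free_subset[OF fin _ lm])
qed simp

end
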